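(* For any deterministic automata $G=(X,\Sigma,\longrightarrow,X_0)$ and $R=(Z,\Sigma,\longrightarrow,Z_0)$, there exists a $\Sigma_{uc}$-admissible supervisor $S$ with $S\|G\sqsubseteq_{cc}R$ if and only if $G\sqsubseteq_{ucr}R$.
   Context: An automaton is a 4-tuple $A=(Q,\Sigma,\longrightarrow,Q_0)$ with state set $Q$, finite event set $\Sigma$, ${\longrightarrow}\subseteq Q\times\Sigma\times Q$ and $\emptyset\neq Q_0\subseteq Q$; write $q\xrightarrow{\sigma}q'$ for $(q,\sigma,q')\in{\longrightarrow}$, $q\xrightarrow{\sigma}$ if some such $q'$ exists, extended to strings. It is deterministic if $|Q_0|=1$ and each state has at most one $\sigma$-successor for each $\sigma$. A state is reachable if reached from an initial state by some string. Events are partitioned into uncontrollable $\Sigma_{uc}$ and controllable $\Sigma_c$; $\Sigma_r\subseteq\Sigma$ is a fixed set of required events. For a supervisor (automaton) $S=(Y,\Sigma,\longrightarrow,Y_0)$, $S\|G=(Y\times X,\Sigma,\longrightarrow,Y_0\times X_0)$ with $(y,x)\xrightarrow{\sigma}(y',x')$ iff $y\xrightarrow{\sigma}y'$ and $x\xrightarrow{\sigma}x'$; $S$ is $\Sigma_{uc}$-admissible w.r.t. $G$ if for every reachable $(y,x)$ of $S\|G$ and $\sigma\in\Sigma_{uc}$, $x\xrightarrow{\sigma}$ implies $(y,x)\xrightarrow{\sigma}$. For automata $A_1,A_2$ with state sets $Q_1,Q_2$, initial sets $Q_{01},Q_{02}$, and $\Phi\subseteq Q_1\times Q_2$, consider: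 (initial state) every $q_0\in Q_{01}$ has $p_0\in Q_{02}$ with $(q_0,p_0)\in\Phi$; ($\Sigma'$-forward) for $(q,p)\in\Phi$, $\sigma\in\Sigma'$, $q\xrightarrow{\sigma}q'$ there is $p'$ with $p\xrightarrow{\sigma}p'$, $(q',p')\in\Phi$; ($\Sigma_r$-backward) for $(q,p)\in\Phi$, $\sigma\in\Sigma_r$, $p\xrightarrow{\sigma}p'$ there is $q'$ with $q\xrightarrow{\sigma}q'$, $(q',p')\in\Phi$. $\Phi$ is a cc-simulation if it satisfies (initial state), ($\Sigma$-forward) and ($\Sigma_r$-backward), and a $\Sigma_{ucr}$-simulation if it satisfies (initial state), ($\Sigma_{uc}$-forward) and ($\Sigma_r$-backward). $A_1\sqsubseteq_{cc}A_2$ (resp. $A_1\sqsubseteq_{ucr}A_2$) means such a relation exists. *)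

theory Defs
  imports Main
begin

text \<open>An automaton A = (Q, Ev, trans, Q0) over a fixed event set Ev
  (the event set is passed separately as a parameter).\<close>
record ('q, 'e) automaton =
  states :: "'q set"
  trans  :: "('q \<times> 'e \<times> 'q) set"
  init   :: "'q set"

definition is_automaton :: "'e set \<Rightarrow> ('q, 'e) automaton \<Rightarrow> bool" where
  "is_automaton Ev A \<longleftrightarrow>
     trans A \<subseteq> states A \<times> Ev \<times> states A \<and>
     init A \<subseteq> states A \<and> init A \<noteq> {}"

definition deterministic :: "('q, 'e) automaton \<Rightarrow> bool" where
  "deterministic A \<longleftrightarrow>
     card (init A) = 1 \<and>
     (\<forall>q \<sigma> q1 q2. (q, \<sigma>, q1) \<in> trans A \<longrightarrow> (q, \<sigma>, q2) \<in> trans A \<longrightarrow> q1 = q2)"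

inductive steps :: "('q, 'e) automaton \<Rightarrow> 'q \<Rightarrow> 'e list \<Rightarrow> 'q \<Rightarrow> bool" for A where
  steps_Nil: "steps A q [] q"
| steps_Cons: "(q, \<sigma>, q') \<in> trans A \<Longrightarrow> steps A q' s q'' \<Longrightarrow> steps A q (\<sigma> # s) q''"

definition reachable :: "('q, 'e) automaton \<Rightarrow> 'q \<Rightarrow> bool" where
  "reachable A q \<longleftrightarrow> (\<exists>q0 s. q0 \<in> init A \<and> steps A q0 s q)"

definition enabled :: "('q, 'e) automaton \<Rightarrow> 'q \<Rightarrow> 'e \<Rightarrow> bool" where
  "enabled A q \<sigma> \<longleftrightarrow> (\<exists>q'. (q, \<sigma>, q') \<in> trans A)"

definition sync :: "('y, 'e) automaton \<Rightarrow> ('x, 'e) automaton \<Rightarrow> ('y \<times> 'x, 'e) automaton" where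
  "sync S G = \<lparr> states = states S \<times> states G,
      trans = {((y, x), \<sigma>, (y', x')) | y x \<sigma> y' x'.
                 (y, \<sigma>, y') \<in> trans S \<and> (x, \<sigma>, x') \<in> trans G},
      init = init S \<times> init G \<rparr>"

definition admissible :: "'e set \<Rightarrow> ('y, 'e) automaton \<Rightarrow> ('x, 'e) automaton \<Rightarrow> bool" where
  "admissible Euc S G \<longleftrightarrow>
     (\<forall>y x \<sigma>. reachable (sync S G) (y, x) \<longrightarrow> \<sigma> \<in> Euc \<longrightarrow>
        enabled G x \<sigma> \<longrightarrow> enabled (sync S G) (y, x) \<sigma>)"

definition sim_rel :: "'e set \<Rightarrow> 'e set \<Rightarrow> ('p, 'e) automaton \<Rightarrow> ('q, 'e) automaton
                        \<Rightarrow> ('p \<times> 'q) set \<Rightarrow> bool" where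
  "sim_rel EvF Er A1 A2 Phi \<longleftrightarrow>
     Phi \<subseteq> states A1 \<times> states A2 \<and>
     (\<forall>q0 \<in> init A1. \<exists>p0 \<in> init A2. (q0, p0) \<in> Phi) \<and>
     (\<forall>q p \<sigma> q'. (q, p) \<in> Phi \<longrightarrow> \<sigma> \<in> EvF \<longrightarrow> (q, \<sigma>, q') \<in> trans A1 \<longrightarrow>
        (\<exists>p'. (p, \<sigma>, p') \<in> trans A2 \<and> (q', p') \<in> Phi)) \<and>
     (\<forall>q p \<sigma> p'. (q, p) \<in> Phi \<longrightarrow> \<sigma> \<in> Er \<longrightarrow> (p, \<sigma>, p') \<in> trans A2 \<longrightarrow>
        (\<exists>q'. (q, \<sigma>, q') \<in> trans A1 \<and> (q', p') \<in> Phi))"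

definition cc_sim :: "'e set \<Rightarrow> 'e set \<Rightarrow> ('p, 'e) automaton \<Rightarrow> ('q, 'e) automaton \<Rightarrow> bool" where
  "cc_sim Ev Er A1 A2 \<longleftrightarrow> (\<exists>Phi. sim_rel Ev Er A1 A2 Phi)"

definition ucr_sim :: "'e set \<Rightarrow> 'e set \<Rightarrow> ('p, 'e) automaton \<Rightarrow> ('q, 'e) automaton \<Rightarrow> bool" where
  "ucr_sim Euc Er A1 A2 \<longleftrightarrow> (\<exists>Phi. sim_rel Euc Er A1 A2 Phi)"

end

(* Necessity: restrict a cc-simulation from S || G to R to reachable states and project it
   onto G.  Admissibility lets S || G follow every uncontrollable move of G from a reachable
   state, and determinism of G makes it the same move, so the projection is a
   Sigma_ucr-simulation.
   Sufficiency: given a Sigma_ucr-simulation Psi, let the supervisor run G and R in lock-step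
   on pairs inside Psi.  Determinism of G keeps every reachable state of S || G of the form
   ((x, z), x), so relating it to z is a cc-simulation, and the uncontrollable-forward clause
   of Psi is exactly admissibility. *)
theory Submission
  imports Defs
begin

lemma deterministic_init_eq:
  "deterministic A \<Longrightarrow> q \<in> init A \<Longrightarrow> q' \<in> init A \<Longrightarrow> q = q'"
  unfolding deterministic_def by (auto simp: card_1_singleton_iff)

lemma deterministic_trans_eq:
  "deterministic A \<Longrightarrow> (q, \<sigma>, q1) \<in> trans A \<Longrightarrow> (q, \<sigma>, q2) \<in> trans A \<Longrightarrow> q1 = q2"
  unfolding deterministic_def by blast

lemma steps_snoc:
  "steps A q s q' \<Longrightarrow> (q', \<sigma>, q'') \<in> trans A \<Longrightarrow> steps A q (s @ [\<sigma>]) q''"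
  by (induction rule: steps.induct) (auto intro: steps.intros)

lemma reachable_init: "q \<in> init A \<Longrightarrow> reachable A q"
  unfolding reachable_def by (blast intro: steps_Nil)

lemma reachable_trans: "reachable A q \<Longrightarrow> (q, \<sigma>, q') \<in> trans A \<Longrightarrow> reachable A q'"
  unfolding reachable_def by (metis steps_snoc)

lemma reachable_induct [consumes 1, case_names init trans]:
  assumes "reachable A q"
    and "\<And>q0. q0 \<in> init A \<Longrightarrow> P q0"
    and "\<And>q \<sigma> q'. P q \<Longrightarrow> (q, \<sigma>, q') \<in> trans A \<Longrightarrow> P q'"
  shows "P q"
proof -
  have "P q'" if "steps A q s q'" "P q" for q s q'
    using that by (induction rule: steps.induct) (auto intro: assms(3))
  with assms(1,2) show ?thesis unfolding reachable_def by blast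
qed

lemma init_sync [simp]: "init (sync S G) = init S \<times> init G"
  and states_sync [simp]: "states (sync S G) = states S \<times> states G"
  and trans_sync_iff [simp]:
    "((y, x), \<sigma>, (y', x')) \<in> trans (sync S G) \<longleftrightarrow> (y, \<sigma>, y') \<in> trans S \<and> (x, \<sigma>, x') \<in> trans G"
  by (auto simp: sync_def)

lemma enabled_sync_iff: "enabled (sync S G) (y, x) \<sigma> \<longleftrightarrow> enabled S y \<sigma> \<and> enabled G x \<sigma>"
  unfolding enabled_def by (auto simp: sync_def)

lemma sim_rel_restrict_reachable:
  assumes "sim_rel EvF Er A1 A2 Phi"
  shows "sim_rel EvF Er A1 A2 {(q, p) \<in> Phi. reachable A1 q}"
  unfolding sim_rel_def
proof (intro conjI allI impI ballI)
  show "{(q, p) \<in> Phi. reachable A1 q} \<subseteq> states A1 \<times> states A2"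
    using assms unfolding sim_rel_def by blast
next
  fix q0 assume "q0 \<in> init A1"
  then show "\<exists>p0 \<in> init A2. (q0, p0) \<in> {(q, p) \<in> Phi. reachable A1 q}"
    using assms reachable_init unfolding sim_rel_def by fastforce
next
  fix q p \<sigma> q'
  assume "(q, p) \<in> {(q, p) \<in> Phi. reachable A1 q}" "\<sigma> \<in> EvF" "(q, \<sigma>, q') \<in> trans A1"
  then show "\<exists>p'. (p, \<sigma>, p') \<in> trans A2 \<and> (q', p') \<in> {(q, p) \<in> Phi. reachable A1 q}"
    using assms reachable_trans unfolding sim_rel_def by fastforce
next
  fix q p \<sigma> p'
  assume "(q, p) \<in> {(q, p) \<in> Phi. reachable A1 q}" "\<sigma> \<in> Er" "(p, \<sigma>, p') \<in> trans A2"
  then show "\<exists>q'. (q, \<sigma>, q') \<in> trans A1 \<and> (q', p') \<in> {(q, p) \<in> Phi. reachable A1 q}"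
    using assms reachable_trans unfolding sim_rel_def by fastforce
qed

lemma admissible_sync_step:
  assumes "admissible Euc S G" "deterministic G" "reachable (sync S G) (y, x)"
    and "\<sigma> \<in> Euc" "(x, \<sigma>, x') \<in> trans G"
  obtains y' where "((y, x), \<sigma>, (y', x')) \<in> trans (sync S G)"
proof -
  have "enabled G x \<sigma>"
    using assms(5) unfolding enabled_def by blast
  with assms(1,3,4) have "enabled (sync S G) (y, x) \<sigma>"
    unfolding admissible_def by blast
  then obtain y' x'' where y': "(y, \<sigma>, y') \<in> trans S" and x'': "(x, \<sigma>, x'') \<in> trans G"
    unfolding enabled_sync_iff by (auto simp: enabled_def)
  have "x'' = x'"
    using deterministic_trans_eq[OF assms(2) x'' assms(5)] .
  with y' x'' show thesis
    using that by simp
qed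

lemma sim_rel_project_sync:
  assumes Phi: "sim_rel Ev Er (sync S G) R Phi"
    and Phi_reachable: "\<And>y x z. ((y, x), z) \<in> Phi \<Longrightarrow> reachable (sync S G) (y, x)"
    and "init S \<noteq> {}" "admissible Euc S G" "deterministic G" "Euc \<subseteq> Ev"
  shows "sim_rel Euc Er G R {(x, z) | y x z. ((y, x), z) \<in> Phi}"
  unfolding sim_rel_def
proof (intro conjI allI impI ballI)
  show "{(x, z) | y x z. ((y, x), z) \<in> Phi} \<subseteq> states G \<times> states R"
    using Phi unfolding sim_rel_def by auto
next
  fix x0 assume "x0 \<in> init G"
  moreover obtain y0 where "y0 \<in> init S"
    using assms(3) by blast
  ultimately show "\<exists>z0 \<in> init R. (x0, z0) \<in> {(x, z) | y x z. ((y, x), z) \<in> Phi}"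
    using Phi unfolding sim_rel_def by fastforce
next
  fix x z \<sigma> x'
  assume "(x, z) \<in> {(x, z) | y x z. ((y, x), z) \<in> Phi}" and \<sigma>: "\<sigma> \<in> Euc"
    and x': "(x, \<sigma>, x') \<in> trans G"
  then obtain y where yxz: "((y, x), z) \<in> Phi"
    by blast
  obtain y' where "((y, x), \<sigma>, (y', x')) \<in> trans (sync S G)"
    using admissible_sync_step[OF assms(4,5) Phi_reachable[OF yxz] \<sigma> x'] .
  moreover have "\<sigma> \<in> Ev"
    using \<sigma> assms(6) by blast
  ultimately obtain z' where "(z, \<sigma>, z') \<in> trans R" "((y', x'), z') \<in> Phi"
    using Phi yxz unfolding sim_rel_def by blast
  then show "\<exists>z'. (z, \<sigma>, z') \<in> trans R \<and> (x', z') \<in> {(x, z) | y x z. ((y, x), z) \<in> Phi}"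
    by blast
next
  fix x z \<sigma> z'
  assume "(x, z) \<in> {(x, z) | y x z. ((y, x), z) \<in> Phi}" "\<sigma> \<in> Er" "(z, \<sigma>, z') \<in> trans R"
  then obtain y w where "((y, x), \<sigma>, w) \<in> trans (sync S G)" "(w, z') \<in> Phi"
    using Phi unfolding sim_rel_def by blast
  then show "\<exists>x'. (x, \<sigma>, x') \<in> trans G \<and> (x', z') \<in> {(x, z) | y x z. ((y, x), z) \<in> Phi}"
    by (cases w) auto
qed

lemma ucr_sim_if_supervisor_cc_sim:
  assumes "is_automaton Ev S" "admissible Euc S G" "cc_sim Ev Er (sync S G) R"
    and "deterministic G" "Euc \<subseteq> Ev"
  shows "ucr_sim Euc Er G R"
proof -
  obtain Phi where "sim_rel Ev Er (sync S G) R Phi"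
    using assms(3) unfolding cc_sim_def by blast
  then have "sim_rel Ev Er (sync S G) R {(q, z) \<in> Phi. reachable (sync S G) q}"
    by (rule sim_rel_restrict_reachable)
  moreover have "init S \<noteq> {}"
    using assms(1) unfolding is_automaton_def by blast
  ultimately show ?thesis
    using sim_rel_project_sync assms(2,4,5) unfolding ucr_sim_def by blast
qed

definition sim_supervisor ::
    "('x, 'e) automaton \<Rightarrow> ('z, 'e) automaton \<Rightarrow> ('x \<times> 'z) set \<Rightarrow> ('x \<times> 'z, 'e) automaton" where
  "sim_supervisor G R Psi = \<lparr> states = Psi,
     trans = {((x, z), \<sigma>, (x', z')) | x z \<sigma> x' z'. (x, z) \<in> Psi \<and> (x', z') \<in> Psi
                \<and> (x, \<sigma>, x') \<in> trans G \<and> (z, \<sigma>, z') \<in> trans R},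
     init = {(x, z). x \<in> init G \<and> z \<in> init R \<and> (x, z) \<in> Psi} \<rparr>"

lemma states_sim_supervisor [simp]: "states (sim_supervisor G R Psi) = Psi"
  and init_sim_supervisor_iff [simp]:
    "(x, z) \<in> init (sim_supervisor G R Psi) \<longleftrightarrow> x \<in> init G \<and> z \<in> init R \<and> (x, z) \<in> Psi"
  and trans_sim_supervisor_iff [simp]:
    "((x, z), \<sigma>, (x', z')) \<in> trans (sim_supervisor G R Psi) \<longleftrightarrow>
       (x, z) \<in> Psi \<and> (x', z') \<in> Psi \<and> (x, \<sigma>, x') \<in> trans G \<and> (z, \<sigma>, z') \<in> trans R"
  by (auto simp: sim_supervisor_def)

lemma is_automaton_sim_supervisor:
  assumes "is_automaton Ev G" "sim_rel Euc Er G R Psi"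
  shows "is_automaton Ev (sim_supervisor G R Psi)"
proof -
  obtain x0 where "x0 \<in> init G"
    using assms(1) unfolding is_automaton_def by blast
  then obtain z0 where "(x0, z0) \<in> init (sim_supervisor G R Psi)"
    using assms(2) unfolding sim_rel_def by auto
  moreover have "trans (sim_supervisor G R Psi) \<subseteq> Psi \<times> Ev \<times> Psi"
    using assms(1) unfolding is_automaton_def sim_supervisor_def by auto
  moreover have "init (sim_supervisor G R Psi) \<subseteq> Psi"
    by (auto simp: sim_supervisor_def)
  ultimately show ?thesis
    unfolding is_automaton_def by fastforce
qed

lemma reachable_sync_sim_supervisor:
  assumes "deterministic G" "reachable (sync (sim_supervisor G R Psi) G) q"
  shows "\<exists>x z. q = ((x, z), x) \<and> (x, z) \<in> Psi"
  using assms(2)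
proof (induction rule: reachable_induct)
  case (init q0)
  then obtain x z x' where "q0 = ((x, z), x')" "x \<in> init G" "x' \<in> init G" "(x, z) \<in> Psi"
    by (auto simp: sim_supervisor_def)
  then show ?case
    using deterministic_init_eq[OF assms(1)] by blast
next
  case (trans q \<sigma> q')
  then obtain x z where q: "q = ((x, z), x)"
    by blast
  obtain x' z' x'' where q': "q' = ((x', z'), x'')"
    by (metis prod.exhaust)
  have "(x, \<sigma>, x') \<in> trans G" "(x, \<sigma>, x'') \<in> trans G" "(x', z') \<in> Psi"
    using trans.hyps q q' by auto
  then show ?case
    using q' deterministic_trans_eq[OF assms(1)] by blast
qed

lemma admissible_sim_supervisor:
  assumes "deterministic G" "sim_rel Euc Er G R Psi"
  shows "admissible Euc (sim_supervisor G R Psi) G"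
  unfolding admissible_def
proof (intro allI impI)
  fix s x \<sigma>
  assume "reachable (sync (sim_supervisor G R Psi) G) (s, x)" "\<sigma> \<in> Euc" "enabled G x \<sigma>"
  moreover from this(1) obtain z where s: "s = (x, z)" "(x, z) \<in> Psi"
    using reachable_sync_sim_supervisor[OF assms(1)] by blast
  ultimately obtain x' z' where "(x, \<sigma>, x') \<in> trans G" "(z, \<sigma>, z') \<in> trans R" "(x', z') \<in> Psi"
    using assms(2) unfolding sim_rel_def enabled_def by blast
  then show "enabled (sync (sim_supervisor G R Psi) G) (s, x) \<sigma>"
    using s unfolding enabled_def by auto
qed

lemma sim_rel_sync_sim_supervisor:
  assumes "deterministic G" "sim_rel Euc Er G R Psi"
  shows "sim_rel Ev Er (sync (sim_supervisor G R Psi) G) R {(((x, z), x), z) | x z. (x, z) \<in> Psi}"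
  unfolding sim_rel_def
proof (intro conjI allI impI ballI)
  show "{(((x, z), x), z) | x z. (x, z) \<in> Psi}
          \<subseteq> states (sync (sim_supervisor G R Psi) G) \<times> states R"
    using assms(2) unfolding sim_rel_def by auto
next
  fix q0 assume "q0 \<in> init (sync (sim_supervisor G R Psi) G)"
  then obtain x z x' where "q0 = ((x, z), x')" "x \<in> init G" "x' \<in> init G" "z \<in> init R"
      "(x, z) \<in> Psi"
    by (auto simp: sim_supervisor_def)
  then show "\<exists>z0 \<in> init R. (q0, z0) \<in> {(((x, z), x), z) | x z. (x, z) \<in> Psi}"
    using deterministic_init_eq[OF assms(1)] by blast
next
  fix q z \<sigma> q'
  assume "(q, z) \<in> {(((x, z), x), z) | x z. (x, z) \<in> Psi}"
    and step: "(q, \<sigma>, q') \<in> trans (sync (sim_supervisor G R Psi) G)"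
  then obtain x where q: "q = ((x, z), x)"
    by blast
  obtain x' z' x'' where q': "q' = ((x', z'), x'')"
    by (metis prod.exhaust)
  have "(x, \<sigma>, x') \<in> trans G" "(x, \<sigma>, x'') \<in> trans G" "(z, \<sigma>, z') \<in> trans R" "(x', z') \<in> Psi"
    using step q q' by auto
  then show "\<exists>z'. (z, \<sigma>, z') \<in> trans R \<and> (q', z') \<in> {(((x, z), x), z) | x z. (x, z) \<in> Psi}"
    using q' deterministic_trans_eq[OF assms(1)] by blast
next
  fix q z \<sigma> z'
  assume "(q, z) \<in> {(((x, z), x), z) | x z. (x, z) \<in> Psi}" "\<sigma> \<in> Er" "(z, \<sigma>, z') \<in> trans R"
  moreover from this(1) obtain x where q: "q = ((x, z), x)" "(x, z) \<in> Psi"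
    by blast
  ultimately obtain x' where "(x, \<sigma>, x') \<in> trans G" "(x', z') \<in> Psi"
    using assms(2) unfolding sim_rel_def by blast
  then show "\<exists>q'. (q, \<sigma>, q') \<in> trans (sync (sim_supervisor G R Psi) G)
                  \<and> (q', z') \<in> {(((x, z), x), z) | x z. (x, z) \<in> Psi}"
    using q \<open>(z, \<sigma>, z') \<in> trans R\<close> by auto
qed

lemma supervisor_cc_sim_if_ucr_sim:
  fixes G :: "('x, 'e) automaton" and R :: "('z, 'e) automaton"
  assumes "is_automaton Ev G" "deterministic G" "ucr_sim Euc Er G R"
  shows "\<exists>S :: ('x \<times> 'z, 'e) automaton. is_automaton Ev S \<and> admissible Euc S G
           \<and> cc_sim Ev Er (sync S G) R"
proof -
  obtain Psi where Psi: "sim_rel Euc Er G R Psi"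
    using assms(3) unfolding ucr_sim_def by blast
  show ?thesis
  proof (intro exI[where x = "sim_supervisor G R Psi"] conjI)
    show "is_automaton Ev (sim_supervisor G R Psi)"
      using assms(1) Psi by (rule is_automaton_sim_supervisor)
    show "admissible Euc (sim_supervisor G R Psi) G"
      using assms(2) Psi by (rule admissible_sim_supervisor)
    show "cc_sim Ev Er (sync (sim_supervisor G R Psi) G) R"
      using sim_rel_sync_sim_supervisor[OF assms(2) Psi] unfolding cc_sim_def by blast
  qed
qed

theorem corollary1:
  fixes Ev Euc Er :: "'e set"
    and G :: "('x, 'e) automaton" and R :: "('z, 'e) automaton"
  assumes "finite Ev" and "Euc \<subseteq> Ev" and "Er \<subseteq> Ev"
    and "is_automaton Ev G" and "deterministic G"
    and "is_automaton Ev R" and "deterministic R"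
  shows "((\<forall>S :: ('y, 'e) automaton. is_automaton Ev S \<and> admissible Euc S G
              \<and> cc_sim Ev Er (sync S G) R \<longrightarrow> ucr_sim Euc Er G R)
         \<and> (ucr_sim Euc Er G R \<longrightarrow>
              (\<exists>S :: ('x \<times> 'z, 'e) automaton. is_automaton Ev S \<and> admissible Euc S G
                 \<and> cc_sim Ev Er (sync S G) R)))"
  using ucr_sim_if_supervisor_cc_sim[OF _ _ _ assms(5,2)]
    supervisor_cc_sim_if_ucr_sim[OF assms(4,5)] by blast

end
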